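(* There exists an absolute constant $U>0$ such that for every member $S_l$ of the degenerating family, every $z\in H$ with $\operatorname{Im} z<1$ and every $t\ge 0$, $$\Pi_l(z,t)\le U e^{t}.$$
   Context: Let $\{S_l\}$ be a degenerating family of hyperbolic Riemann surfaces of genus $g$ with one puncture, parametrized by $l$ near $0\in\mathbf{R}^{6g-4}$. For each $l$, $\Gamma_l$ is a Fuchsian group with $S_l\simeq H/\Gamma_l$, where $H=\{z\in\mathbf C:\operatorname{Im} z>0\}$ carries the hyperbolic metric with distance $d(\cdot,\cdot)$; $\Gamma_l$ is normalized so that it contains the parabolic element $z\mapsto z+1$, and $\Gamma_\infty$ denotes the cyclic group generated by it. For $z\in H$ and a class $[\delta]\in\Gamma_\infty\backslash\Gamma_l$, the canonical representative $\hat\delta=\hat\delta(z,[\delta])$ is the unique element of $[\delta]$ with $-\tfrac12\le \operatorname{Re}\hat\delta z<\tfrac12$. For $z$ with $\operatorname{Im} z<1$ define $\Pi_l(z,t)=\#\{[\delta]\in\Gamma_\infty\backslash\Gamma_l : d(i,\hat\delta z)\le t\}$. *)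

theory Defs
  imports "HOL-Analysis.Analysis"
begin

text \<open>Real 2x2 matrices (a,b,c,d) standing for [[a,b],[c,d]]; a Fuchsian group is
  represented by its (full, sign-closed) preimage in SL(2,R).\<close>

type_synonym mat2 = "real \<times> real \<times> real \<times> real"

definition mmult :: "mat2 \<Rightarrow> mat2 \<Rightarrow> mat2" where
  "mmult A B = (case A of (a,b,c,d) \<Rightarrow> case B of (a',b',c',d') \<Rightarrow>
     (a*a' + b*c', a*b' + b*d', c*a' + d*c', c*b' + d*d'))"

definition mneg :: "mat2 \<Rightarrow> mat2" where
  "mneg A = (case A of (a,b,c,d) \<Rightarrow> (-a,-b,-c,-d))"

definition minv :: "mat2 \<Rightarrow> mat2" where
  "minv A = (case A of (a,b,c,d) \<Rightarrow> (d,-b,-c,a))"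

definition Imat :: mat2 where "Imat = (1,0,0,1)"

definition SL2R :: "mat2 set" where
  "SL2R = {(a,b,c,d). a*d - b*c = 1}"

definition mtrace :: "mat2 \<Rightarrow> real" where
  "mtrace A = (case A of (a,b,c,d) \<Rightarrow> a + d)"

definition lower_left :: "mat2 \<Rightarrow> real" where
  "lower_left A = (case A of (a,b,c,d) \<Rightarrow> c)"

definition mnorm1 :: "mat2 \<Rightarrow> real" where
  "mnorm1 A = (case A of (a,b,c,d) \<Rightarrow> \<bar>a\<bar> + \<bar>b\<bar> + \<bar>c\<bar> + \<bar>d\<bar>)"

definition mob :: "mat2 \<Rightarrow> complex \<Rightarrow> complex" where
  "mob A z = (case A of (a,b,c,d) \<Rightarrow>
     (complex_of_real a * z + complex_of_real b) / (complex_of_real c * z + complex_of_real d))"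

definition Tmat :: "int \<Rightarrow> mat2" where "Tmat n = (1, of_int n, 0, 1)"

definition hdist :: "complex \<Rightarrow> complex \<Rightarrow> real" where
  "hdist z w = arcosh (1 + (cmod (z - w))\<^sup>2 / (2 * Im z * Im w))"

definition upper_half :: "complex set" where "upper_half = {z. Im z > 0}"

definition fuchsian :: "mat2 set \<Rightarrow> bool" where
  "fuchsian G \<longleftrightarrow> G \<subseteq> SL2R \<and> Imat \<in> G \<and> mneg Imat \<in> G
     \<and> (\<forall>A\<in>G. \<forall>B\<in>G. mmult A B \<in> G) \<and> (\<forall>A\<in>G. minv A \<in> G)
     \<and> (\<forall>r. finite {A\<in>G. mnorm1 A \<le> r})"

definition torsion_free :: "mat2 set \<Rightarrow> bool" where
  "torsion_free G \<longleftrightarrow> (\<forall>A\<in>G. (\<exists>w\<in>upper_half. mob A w = w) \<longrightarrow> A = Imat \<or> A = mneg Imat)"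

definition parabolic :: "mat2 \<Rightarrow> bool" where
  "parabolic A \<longleftrightarrow> \<bar>mtrace A\<bar> = 2 \<and> A \<noteq> Imat \<and> A \<noteq> mneg Imat"

definition Gamma_inf :: "mat2 set" where
  "Gamma_inf = {M. \<exists>n::int. M = Tmat n \<or> M = mneg (Tmat n)}"

definition dirichlet_domain :: "mat2 set \<Rightarrow> complex \<Rightarrow> complex set" where
  "dirichlet_domain G p = {w\<in>upper_half. \<forall>A\<in>G. hdist w p \<le> hdist w (mob A p)}"

definition hyp_area :: "complex set \<Rightarrow> ennreal" where
  "hyp_area S = (\<integral>\<^sup>+ w. indicator S w * ennreal (1 / (Im w)\<^sup>2) \<partial>lborel)"

text \<open>G uniformizes a hyperbolic surface of genus g with exactly one puncture, normalized
  so that the stabilizer of the cusp at infinity is generated by z \<mapsto> z+1.\<close>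
definition normalized_once_punctured :: "nat \<Rightarrow> mat2 set \<Rightarrow> bool" where
  "normalized_once_punctured g G \<longleftrightarrow>
     fuchsian G \<and> torsion_free G
     \<and> Tmat 1 \<in> G
     \<and> (\<forall>A\<in>G. lower_left A = 0 \<longrightarrow> A \<in> Gamma_inf)
     \<and> (\<forall>A\<in>G. parabolic A \<longrightarrow> (\<exists>S\<in>G. \<exists>M\<in>Gamma_inf. mmult A S = mmult S M))
     \<and> hyp_area (dirichlet_domain G (2 * \<i>)) = ennreal (2 * pi * (2 * real g - 1))"

definition coset_classes :: "mat2 set \<Rightarrow> mat2 set set" where
  "coset_classes G = (\<lambda>\<delta>. (\<lambda>M. mmult M \<delta>) ` Gamma_inf) ` G"

definition canon_pt :: "complex \<Rightarrow> mat2 set \<Rightarrow> complex" where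
  "canon_pt z C = (THE w. \<exists>\<delta>\<in>C. w = mob \<delta> z \<and> - 1/2 \<le> Re w \<and> Re w < 1/2)"

definition count_set :: "mat2 set \<Rightarrow> complex \<Rightarrow> real \<Rightarrow> mat2 set set" where
  "count_set G z t = {C \<in> coset_classes G. hdist \<i> (canon_pt z C) \<le> t}"

definition Pi_count :: "mat2 set \<Rightarrow> complex \<Rightarrow> real \<Rightarrow> nat" where
  "Pi_count G z t = card (count_set G z t)"

end

theory Submission
  imports Defs
begin

text \<open>Shimizu's lemma: in a discrete group containing \<open>T: z \<mapsto> z + 1\<close>, every element with
  lower left entry \<open>c \<noteq> 0\<close> has \<open>\<bar>c\<bar> \<ge> 1\<close>; otherwise the iterates of \<open>A \<mapsto> A T A\<^sup>-\<^sup>1\<close> square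
  \<open>c\<close> while the other entries stay bounded, giving infinitely many elements of bounded norm.

  If the class of \<open>\<delta> = (a,b,c,d)\<close> is counted, then \<open>Im (\<delta> z) = Im z / \<bar>c z + d\<bar>\<^sup>2 \<ge> e\<^sup>-\<^sup>t\<close>, so
  \<open>\<bar>c z + d\<bar>\<^sup>2 \<le> Im z e\<^sup>t\<close>. For two classes, \<open>Im (cnj (c\<^sub>1 z + d\<^sub>1) (c\<^sub>2 z + d\<^sub>2)) = Im z (c\<^sub>2 d\<^sub>1 - c\<^sub>1 d\<^sub>2)\<close>,
  and \<open>c\<^sub>2 d\<^sub>1 - c\<^sub>1 d\<^sub>2\<close> is the lower left entry of \<open>\<delta>\<^sub>2 \<delta>\<^sub>1\<^sup>-\<^sup>1\<close>: by Shimizu it vanishes, and then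
  the classes coincide, or has modulus at least 1. Hence the arguments of the denominators of
  distinct classes are at least \<open>e\<^sup>-\<^sup>t\<close> apart in \<open>[0, \<pi>]\<close>, leaving room for at most
  \<open>\<pi> e\<^sup>t + 1\<close> classes. Neither \<open>Im z < 1\<close> nor the genus enters the argument.\<close>

lemma mmult_assoc: "mmult (mmult A B) C = mmult A (mmult B C)"
  by (cases A; cases B; cases C) (simp add: mmult_def algebra_simps)

lemma minv_mmult_SL2R: "A \<in> SL2R \<Longrightarrow> mmult (minv A) A = Imat"
  by (cases A) (auto simp: mmult_def minv_def Imat_def SL2R_def algebra_simps)

lemma mmult_Imat [simp]: "mmult Imat A = A" "mmult A Imat = A"
  by (cases A; simp add: mmult_def Imat_def)+

lemma Gamma_inf_subset_SL2R: "Gamma_inf \<subseteq> SL2R"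
  by (auto simp: Gamma_inf_def SL2R_def Tmat_def mneg_def)

lemma Gamma_inf_mmult: "M \<in> Gamma_inf \<Longrightarrow> N \<in> Gamma_inf \<Longrightarrow> mmult M N \<in> Gamma_inf"
  unfolding Gamma_inf_def
proof clarify
  fix m n :: int
  assume "M = Tmat m \<or> M = mneg (Tmat m)" "N = Tmat n \<or> N = mneg (Tmat n)"
  then show "\<exists>k. mmult M N = Tmat k \<or> mmult M N = mneg (Tmat k)"
    by (intro exI[of _ "m + n"]) (auto simp: mmult_def Tmat_def mneg_def)
qed

lemma Gamma_inf_minv: "M \<in> Gamma_inf \<Longrightarrow> minv M \<in> Gamma_inf"
  unfolding Gamma_inf_def
proof clarify
  fix m :: int
  assume "M = Tmat m \<or> M = mneg (Tmat m)"
  then show "\<exists>k. minv M = Tmat k \<or> minv M = mneg (Tmat k)"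
    by (intro exI[of _ "- m"]) (auto simp: minv_def Tmat_def mneg_def)
qed

lemma Gamma_inf_mmult_right_image:
  assumes "M \<in> Gamma_inf"
  shows "(\<lambda>N. mmult N M) ` Gamma_inf = Gamma_inf"
proof
  show "(\<lambda>N. mmult N M) ` Gamma_inf \<subseteq> Gamma_inf"
    using assms Gamma_inf_mmult by blast
  show "Gamma_inf \<subseteq> (\<lambda>N. mmult N M) ` Gamma_inf"
  proof
    fix N assume "N \<in> Gamma_inf"
    moreover have "N = mmult (mmult N (minv M)) M"
      using assms Gamma_inf_subset_SL2R by (auto simp: mmult_assoc minv_mmult_SL2R)
    ultimately show "N \<in> (\<lambda>N. mmult N M) ` Gamma_inf"
      using assms Gamma_inf_mmult Gamma_inf_minv by blast
  qed
qed

definition coset_of :: "mat2 \<Rightarrow> mat2 set" where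
  "coset_of \<delta> = (\<lambda>M. mmult M \<delta>) ` Gamma_inf"

lemma coset_classes_eq: "coset_classes G = coset_of ` G"
  by (simp add: coset_classes_def coset_of_def)

lemma coset_of_Gamma_inf_mmult:
  assumes "M \<in> Gamma_inf"
  shows "coset_of (mmult M \<delta>) = coset_of \<delta>"
proof -
  have "coset_of (mmult M \<delta>) = (\<lambda>N. mmult N \<delta>) ` (\<lambda>N. mmult N M) ` Gamma_inf"
    by (simp add: coset_of_def image_image mmult_assoc)
  then show ?thesis
    by (simp add: Gamma_inf_mmult_right_image[OF assms] coset_of_def)
qed

definition shimizu_step :: "mat2 \<Rightarrow> mat2" where
  "shimizu_step A = mmult (mmult A (Tmat 1)) (minv A)"

lemma shimizu_step_eq:
  assumes "(a,b,c,d) \<in> SL2R"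
  shows "shimizu_step (a,b,c,d) = (1 - a*c, a^2, -(c^2), 1 + a*c)"
  using assms
  by (auto simp: shimizu_step_def mmult_def minv_def Tmat_def SL2R_def algebra_simps power2_eq_square)

lemma shimizu_step_SL2R: "A \<in> SL2R \<Longrightarrow> shimizu_step A \<in> SL2R"
  by (cases A) (simp add: shimizu_step_eq, simp add: SL2R_def algebra_simps power2_eq_square)

lemma shimizu_iterate_SL2R: "A \<in> SL2R \<Longrightarrow> (shimizu_step ^^ n) A \<in> SL2R"
  by (induction n) (simp_all add: shimizu_step_SL2R)

lemma shimizu_iterate_mem:
  assumes "fuchsian G" "Tmat 1 \<in> G" "A \<in> G"
  shows "(shimizu_step ^^ n) A \<in> G"
  using assms by (induction n) (auto simp: fuchsian_def shimizu_step_def)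

lemma shimizu_iterate_entries:
  assumes SL: "(a\<^sub>0,b\<^sub>0,c\<^sub>0,d\<^sub>0) \<in> SL2R" and c: "\<bar>c\<^sub>0\<bar> \<le> 1" and B: "\<bar>a\<^sub>0\<bar> \<le> B" "1 + B * \<bar>c\<^sub>0\<bar> \<le> B"
  shows "\<exists>a b c d. (shimizu_step ^^ n) (a\<^sub>0,b\<^sub>0,c\<^sub>0,d\<^sub>0) = (a,b,c,d) \<and> \<bar>c\<bar> = \<bar>c\<^sub>0\<bar> ^ 2 ^ n \<and> \<bar>a\<bar> \<le> B"
proof (induction n)
  case 0
  then show ?case using B by simp
next
  case (Suc n)
  then obtain a b c d where abcd: "(shimizu_step ^^ n) (a\<^sub>0,b\<^sub>0,c\<^sub>0,d\<^sub>0) = (a,b,c,d)"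
    and c_eq: "\<bar>c\<bar> = \<bar>c\<^sub>0\<bar> ^ 2 ^ n" and a_le: "\<bar>a\<bar> \<le> B"
    by blast
  have "(a,b,c,d) \<in> SL2R"
    using shimizu_iterate_SL2R[OF SL, of n] abcd by simp
  then have step: "(shimizu_step ^^ Suc n) (a\<^sub>0,b\<^sub>0,c\<^sub>0,d\<^sub>0) = (1 - a*c, a^2, -(c^2), 1 + a*c)"
    using abcd by (simp add: shimizu_step_eq)
  have "\<bar>c\<bar> \<le> \<bar>c\<^sub>0\<bar>"
    using c_eq c power_decreasing[of 1 "2 ^ n" "\<bar>c\<^sub>0\<bar>"] by simp
  then have "\<bar>a * c\<bar> \<le> B * \<bar>c\<^sub>0\<bar>"
    unfolding abs_mult using a_le by (simp add: mult_mono)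
  then have "\<bar>1 - a*c\<bar> \<le> B"
    using B(2) by linarith
  moreover have "\<bar>-(c^2)\<bar> = \<bar>c\<^sub>0\<bar> ^ 2 ^ Suc n"
    using c_eq by (simp add: power_abs power_mult[symmetric] mult.commute)
  ultimately show ?case
    using step by auto
qed

lemma shimizu_lemma:
  assumes F: "fuchsian G" and T: "Tmat 1 \<in> G" and A: "A \<in> G" and c_nz: "lower_left A \<noteq> 0"
  shows "1 \<le> \<bar>lower_left A\<bar>"
proof (rule ccontr)
  assume "\<not> 1 \<le> \<bar>lower_left A\<bar>"
  obtain a\<^sub>0 b\<^sub>0 c\<^sub>0 d\<^sub>0 where A_eq: "A = (a\<^sub>0,b\<^sub>0,c\<^sub>0,d\<^sub>0)" by (cases A) auto
  define q where "q = \<bar>c\<^sub>0\<bar>"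
  have q: "0 < q" "q < 1"
    using c_nz \<open>\<not> 1 \<le> \<bar>lower_left A\<bar>\<close> by (auto simp: q_def A_eq lower_left_def)
  define B where "B = max \<bar>a\<^sub>0\<bar> (1 / (1 - q))"
  have "1 \<le> B * (1 - q)"
    using q by (simp add: B_def field_simps max_def)
  then have B: "\<bar>a\<^sub>0\<bar> \<le> B" "1 + B * q \<le> B"
    by (auto simp: B_def algebra_simps)
  have SL: "A \<in> SL2R"
    using F A by (auto simp: fuchsian_def)
  define X where "X n = (shimizu_step ^^ Suc n) A" for n
  define r where "r = 3 + 2 * B + B^2"
  have X_entries: "\<bar>lower_left (X n)\<bar> = q ^ 2 ^ Suc n \<and> mnorm1 (X n) \<le> r" for n
  proof -
    obtain a b c d where abcd: "(shimizu_step ^^ n) A = (a,b,c,d)"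
      and c: "\<bar>c\<bar> = q ^ 2 ^ n" and a: "\<bar>a\<bar> \<le> B"
      using shimizu_iterate_entries[of a\<^sub>0 b\<^sub>0 c\<^sub>0 d\<^sub>0 B n] SL q B by (auto simp: A_eq q_def)
    have X_eq: "X n = (1 - a*c, a^2, -(c^2), 1 + a*c)"
      using shimizu_iterate_SL2R[OF SL, of n] abcd by (simp add: X_def shimizu_step_eq)
    have "\<bar>c\<bar> \<le> 1"
      using c q by (simp add: power_le_one)
    then have "\<bar>a * c\<bar> \<le> B"
      using a mult_mono[of "\<bar>a\<bar>" B "\<bar>c\<bar>" 1] by (simp add: abs_mult)
    moreover have "\<bar>a^2\<bar> \<le> B^2"
      using a power_mono[of "\<bar>a\<bar>" B 2] by (simp add: power_abs)
    moreover have "\<bar>c^2\<bar> \<le> 1"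
      using \<open>\<bar>c\<bar> \<le> 1\<close> power_le_one[of "\<bar>c\<bar>" 2] by (simp add: power_abs)
    ultimately have "mnorm1 (X n) \<le> r"
      by (simp add: X_eq mnorm1_def r_def)
    moreover have "\<bar>lower_left (X n)\<bar> = q ^ 2 ^ Suc n"
      using c by (simp add: X_eq lower_left_def power_abs power_mult[symmetric] mult.commute)
    ultimately show ?thesis by blast
  qed
  have "inj X"
  proof (rule injI)
    fix m n assume "X m = X n"
    then have "q ^ 2 ^ Suc m = q ^ 2 ^ Suc n"
      using X_entries[of m] X_entries[of n] by simp
    then show "m = n"
      using q by (simp add: power_inject_exp')
  qed
  have "X n \<in> G" for n
    unfolding X_def by (rule shimizu_iterate_mem[OF F T A])
  then have "range X \<subseteq> {M \<in> G. mnorm1 M \<le> r}"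
    using X_entries by auto
  moreover have "finite {M \<in> G. mnorm1 M \<le> r}"
    using F by (simp add: fuchsian_def)
  ultimately have "finite (range X)"
    by (rule finite_subset)
  then show False
    using \<open>inj X\<close> finite_imageD infinite_UNIV_nat by blast
qed

definition lower_right :: "mat2 \<Rightarrow> real" where
  "lower_right A = (case A of (a,b,c,d) \<Rightarrow> d)"

definition mob_denom :: "complex \<Rightarrow> mat2 \<Rightarrow> complex" where
  "mob_denom z A = of_real (lower_left A) * z + of_real (lower_right A)"

lemma mob_denom_nonzero:
  assumes "A \<in> SL2R" "0 < Im z"
  shows "mob_denom z A \<noteq> 0"
proof
  assume h: "mob_denom z A = 0"
  moreover have "Im (mob_denom z A) = lower_left A * Im z"
    by (simp add: mob_denom_def)
  ultimately have "lower_left A = 0"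
    using assms(2) by simp
  with h have "lower_right A = 0"
    by (simp add: mob_denom_def)
  with \<open>lower_left A = 0\<close> assms(1) show False
    by (cases A) (simp add: SL2R_def lower_left_def lower_right_def)
qed

lemma Im_mob:
  assumes "A \<in> SL2R" "0 < Im z"
  shows "Im (mob A z) = Im z / (cmod (mob_denom z A))\<^sup>2"
proof (cases A)
  case (fields a b c d)
  then have "a*d - b*c = 1"
    using assms(1) by (simp add: SL2R_def)
  moreover have "Im (mob A z) = (a * Im z * (c * Re z + d) - (a * Re z + b) * (c * Im z)) /
      (cmod (mob_denom z A))\<^sup>2"
    by (simp add: fields mob_def mob_denom_def lower_left_def lower_right_def Im_divide')
  moreover have "a * Im z * (c * Re z + d) - (a * Re z + b) * (c * Im z) = Im z * (a*d - b*c)"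
    by (simp add: algebra_simps)
  ultimately show ?thesis
    by simp
qed

lemma mob_Tmat_mmult:
  assumes "A \<in> SL2R" "0 < Im z"
  shows "mob (mmult (Tmat n) A) z = mob A z + of_int n"
    and "mob (mmult (mneg (Tmat n)) A) z = mob A z + of_int n"
proof -
  obtain a b c d where A: "A = (a,b,c,d)"
    by (cases A)
  define p where "p = complex_of_real a * z + complex_of_real b"
  define q where "q = complex_of_real c * z + complex_of_real d"
  have "q \<noteq> 0"
    using mob_denom_nonzero[OF assms] by (simp add: A q_def mob_denom_def lower_left_def lower_right_def)
  then have "(p + of_int n * q) / q = mob A z + of_int n"
    by (simp add: A p_def q_def mob_def add_divide_distrib)
  moreover have "mob (mmult (Tmat n) A) z = (p + of_int n * q) / q"
    by (simp add: A p_def q_def mob_def mmult_def Tmat_def algebra_simps)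
  moreover have "mob (mmult (mneg (Tmat n)) A) z = (- (p + of_int n * q)) / (- q)"
    by (simp add: A p_def q_def mob_def mmult_def Tmat_def mneg_def algebra_simps)
  moreover have "(- (p + of_int n * q)) / (- q) = (p + of_int n * q) / q"
    by (rule minus_divide_divide)
  ultimately show "mob (mmult (Tmat n) A) z = mob A z + of_int n"
    and "mob (mmult (mneg (Tmat n)) A) z = mob A z + of_int n"
    by (simp_all only:)
qed

lemma Im_canon_pt:
  assumes SL: "\<delta> \<in> SL2R" and z: "0 < Im z"
  shows "Im (canon_pt z (coset_of \<delta>)) = Im (mob \<delta> z)"
proof -
  define w\<^sub>0 where "w\<^sub>0 = mob \<delta> z"
  define P where "P w \<longleftrightarrow> (\<exists>\<delta>'\<in>coset_of \<delta>. w = mob \<delta>' z \<and> - 1/2 \<le> Re w \<and> Re w < 1/2)" for w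
  define n\<^sub>0 where "n\<^sub>0 = - \<lfloor>Re w\<^sub>0 + 1/2\<rfloor>"
  have translate: "\<exists>m::int. w = w\<^sub>0 + of_int m" if "P w" for w
    using that mob_Tmat_mmult[OF SL z] unfolding P_def coset_of_def Gamma_inf_def w\<^sub>0_def by blast
  have "Tmat n\<^sub>0 \<in> Gamma_inf"
    by (auto simp: Gamma_inf_def)
  then have "P (w\<^sub>0 + of_int n\<^sub>0)"
    unfolding P_def coset_of_def w\<^sub>0_def n\<^sub>0_def
    by (intro bexI[of _ "mmult (Tmat n\<^sub>0) \<delta>"] conjI)
      (auto simp: mob_Tmat_mmult[OF SL z] n\<^sub>0_def w\<^sub>0_def, linarith+)
  moreover have "w = w\<^sub>0 + of_int n\<^sub>0" if "P w" for w
  proof -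
    obtain m :: int where m: "w = w\<^sub>0 + of_int m"
      using translate \<open>P w\<close> by blast
    have "- 1/2 \<le> Re w" "Re w < 1/2"
      using \<open>P w\<close> by (auto simp: P_def)
    then have "m = n\<^sub>0"
      unfolding n\<^sub>0_def m by simp linarith
    then show ?thesis
      using m by simp
  qed
  ultimately have "canon_pt z (coset_of \<delta>) = w\<^sub>0 + of_int n\<^sub>0"
    unfolding canon_pt_def P_def[symmetric] by (rule the_equality)
  then show ?thesis
    by (simp add: w\<^sub>0_def)
qed

lemma exp_neg_le_Im_if_hdist_i_le:
  assumes w: "0 < Im w" and le: "hdist \<i> w \<le> t"
  shows "exp (- t) \<le> Im w"
proof -
  define v where "v = Im w"
  define Q where "Q = 1 + (cmod (\<i> - w))\<^sup>2 / (2 * v)"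
  have v: "0 < v"
    using w by (simp add: v_def)
  have "\<bar>1 - v\<bar> \<le> cmod (\<i> - w)"
    using abs_Im_le_cmod[of "\<i> - w"] by (simp add: v_def)
  then have "(1 - v)\<^sup>2 \<le> (cmod (\<i> - w))\<^sup>2"
    by (metis abs_ge_zero power_mono power2_abs)
  then have "1 + (1 - v)\<^sup>2 / (2 * v) \<le> Q"
    using v by (simp add: Q_def divide_right_mono)
  moreover have "(v + inverse v) / 2 = 1 + (1 - v)\<^sup>2 / (2 * v)"
    using v by (simp add: field_simps power2_eq_square)
  ultimately have "(v + inverse v) / 2 \<le> Q"
    by simp
  moreover have "1 \<le> Q"
    using v by (simp add: Q_def)
  ultimately have "cosh \<bar>ln v\<bar> \<le> cosh (hdist \<i> w)"
    using v by (simp add: cosh_ln_real hdist_def Q_def v_def)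
  moreover have "0 \<le> hdist \<i> w"
    using \<open>1 \<le> Q\<close> by (simp add: hdist_def Q_def v_def)
  ultimately have "\<bar>ln v\<bar> \<le> t"
    using le cosh_real_nonneg_le_iff[of "\<bar>ln v\<bar>" "hdist \<i> w"] by simp
  then show ?thesis
    using v by (simp add: v_def ln_ge_iff[symmetric])
qed

lemma cmod_mob_denom_le_if_in_count_set:
  assumes SL: "\<delta> \<in> SL2R" and z: "0 < Im z" and C: "coset_of \<delta> \<in> count_set G z t"
  shows "cmod (mob_denom z \<delta>) \<le> sqrt (Im z * exp t)"
proof -
  define q where "q = (cmod (mob_denom z \<delta>))\<^sup>2"
  have q: "0 < q"
    using mob_denom_nonzero[OF SL z] by (simp add: q_def)
  have Im_eq: "Im (canon_pt z (coset_of \<delta>)) = Im z / q"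
    by (simp add: Im_canon_pt[OF SL z] Im_mob[OF SL z] q_def)
  have "hdist \<i> (canon_pt z (coset_of \<delta>)) \<le> t"
    using C by (simp add: count_set_def)
  moreover have "0 < Im (canon_pt z (coset_of \<delta>))"
    using z q by (simp add: Im_eq)
  ultimately have "exp (- t) \<le> Im z / q"
    using exp_neg_le_Im_if_hdist_i_le Im_eq by metis
  then have "q \<le> Im z * exp t"
    using q by (simp add: exp_minus field_simps)
  then show ?thesis
    by (simp add: q_def real_le_rsqrt)
qed

lemma abs_Im_cnj_mult_le: "\<bar>Im (cnj u * v)\<bar> \<le> cmod u * cmod v * \<bar>Arg v - Arg u\<bar>"
proof -
  have "Im (cnj u * v) = Re u * Im v - Im u * Re v"
    by simp
  also have "\<dots> = Re (rcis (cmod u) (Arg u)) * Im (rcis (cmod v) (Arg v))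
                  - Im (rcis (cmod u) (Arg u)) * Re (rcis (cmod v) (Arg v))"
    by (simp only: rcis_cmod_Arg)
  also have "\<dots> = cmod u * cmod v * sin (Arg v - Arg u)"
    by (simp add: sin_diff algebra_simps)
  finally show ?thesis
    using abs_sin_x_le_abs_x[of "Arg v - Arg u"] by (simp add: abs_mult mult_left_mono)
qed

text \<open>Replacing \<open>(c,d)\<close> by \<open>(-c,-d)\<close> does not change the Moebius map but moves \<open>c z + d\<close> into
  the closed upper half plane, where the argument lies in \<open>[0, \<pi>]\<close>.\<close>

definition upper_denom :: "complex \<Rightarrow> mat2 \<Rightarrow> complex" where
  "upper_denom z A = (if Im (mob_denom z A) < 0 then - mob_denom z A else mob_denom z A)"

lemma Arg_upper_denom_bounds: "0 \<le> Arg (upper_denom z A) \<and> Arg (upper_denom z A) \<le> pi"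
  by (simp add: upper_denom_def Arg_less_0 Arg_le_pi)

lemma cmod_upper_denom [simp]: "cmod (upper_denom z A) = cmod (mob_denom z A)"
  by (simp add: upper_denom_def)

lemma abs_Im_cnj_upper_denom:
  "\<bar>Im (cnj (upper_denom z A) * upper_denom z B)\<bar> = \<bar>Im z\<bar> * \<bar>lower_left (mmult B (minv A))\<bar>"
proof -
  have "cnj (upper_denom z A) * upper_denom z B = cnj (mob_denom z A) * mob_denom z B
      \<or> cnj (upper_denom z A) * upper_denom z B = - (cnj (mob_denom z A) * mob_denom z B)"
    by (simp add: upper_denom_def)
  then have "\<bar>Im (cnj (upper_denom z A) * upper_denom z B)\<bar> = \<bar>Im (cnj (mob_denom z A) * mob_denom z B)\<bar>"
    by (metis uminus_complex.sel(2) abs_minus_cancel)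
  moreover have "Im (cnj (mob_denom z A) * mob_denom z B) = Im z * lower_left (mmult B (minv A))"
    by (cases A; cases B) (simp add: mob_denom_def lower_left_def lower_right_def mmult_def minv_def algebra_simps)
  ultimately show ?thesis
    by (simp only: abs_mult)
qed

lemma card_le_if_separated:
  fixes \<phi> :: "'a \<Rightarrow> real"
  assumes \<theta>: "0 < \<theta>" and p: "0 \<le> p" and range: "\<And>x. x \<in> A \<Longrightarrow> 0 \<le> \<phi> x \<and> \<phi> x \<le> p"
    and separated: "\<And>x y. x \<in> A \<Longrightarrow> y \<in> A \<Longrightarrow> \<bar>\<phi> x - \<phi> y\<bar> < \<theta> \<Longrightarrow> x = y"
  shows "finite A \<and> real (card A) \<le> p / \<theta> + 1"
proof -
  define k where "k x = nat \<lfloor>\<phi> x / \<theta>\<rfloor>" for x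
  have "inj_on k A"
  proof (rule inj_onI)
    fix x y assume x: "x \<in> A" and y: "y \<in> A" and "k x = k y"
    moreover have "0 \<le> \<lfloor>\<phi> x / \<theta>\<rfloor>" "0 \<le> \<lfloor>\<phi> y / \<theta>\<rfloor>"
      using range[OF x] range[OF y] \<theta> by simp_all
    ultimately have "\<lfloor>\<phi> x / \<theta>\<rfloor> = \<lfloor>\<phi> y / \<theta>\<rfloor>"
      by (metis k_def eq_nat_nat_iff)
    then have "\<bar>(\<phi> x - \<phi> y) / \<theta>\<bar> < 1"
      by (simp add: diff_divide_distrib) linarith
    then have "\<bar>\<phi> x - \<phi> y\<bar> < \<theta>"
      using \<theta> by simp
    then show "x = y"
      using separated x y by blast
  qed
  moreover have k_range: "k ` A \<subseteq> {..nat \<lfloor>p / \<theta>\<rfloor>}"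
    using range \<theta> by (auto simp: k_def intro!: nat_mono floor_mono divide_right_mono)
  ultimately have "finite A"
    using finite_subset finite_imageD by blast
  have "card A = card (k ` A)"
    using card_image[OF \<open>inj_on k A\<close>] by simp
  also have "\<dots> \<le> card {..nat \<lfloor>p / \<theta>\<rfloor>}"
    using k_range by (intro card_mono) auto
  finally have "card A \<le> nat \<lfloor>p / \<theta>\<rfloor> + 1"
    by simp
  moreover have "real (nat \<lfloor>p / \<theta>\<rfloor>) \<le> p / \<theta>"
    using p \<theta> by simp
  ultimately have "real (card A) \<le> p / \<theta> + 1"
    by linarith
  with \<open>finite A\<close> show ?thesis ..
qed

lemma coset_of_eq_if_abs_lower_left_less_1:
  assumes F: "fuchsian G" and T: "Tmat 1 \<in> G" and stab: "\<forall>M\<in>G. lower_left M = 0 \<longrightarrow> M \<in> Gamma_inf"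
    and A: "A \<in> G" and B: "B \<in> G" and small: "\<bar>lower_left (mmult B (minv A))\<bar> < 1"
  shows "coset_of A = coset_of B"
proof -
  define M where "M = mmult B (minv A)"
  have "M \<in> G"
    using F A B by (simp add: M_def fuchsian_def)
  moreover have "lower_left M = 0"
    using shimizu_lemma[OF F T \<open>M \<in> G\<close>] small by (force simp: M_def)
  ultimately have "M \<in> Gamma_inf"
    using stab by blast
  moreover have "mmult M A = B"
    using F A by (auto simp: M_def fuchsian_def mmult_assoc minv_mmult_SL2R)
  ultimately show ?thesis
    using coset_of_Gamma_inf_mmult by blast
qed

lemma count_set_finite_card_le:
  assumes F: "fuchsian G" and T: "Tmat 1 \<in> G" and stab: "\<forall>M\<in>G. lower_left M = 0 \<longrightarrow> M \<in> Gamma_inf"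
    and z: "0 < Im z"
  shows "finite (count_set G z t) \<and> real (card (count_set G z t)) \<le> pi * exp t + 1"
proof -
  define X where "X = Im z * exp t"
  have "\<forall>C\<in>count_set G z t. \<exists>\<delta>. \<delta> \<in> G \<and> C = coset_of \<delta>"
    by (auto simp: count_set_def coset_classes_eq)
  then obtain rep where rep: "\<And>C. C \<in> count_set G z t \<Longrightarrow> rep C \<in> G \<and> C = coset_of (rep C)"
    by (metis bchoice)
  have SL: "\<And>C. C \<in> count_set G z t \<Longrightarrow> rep C \<in> SL2R"
    using rep F by (auto simp: fuchsian_def)
  define n where "n C = upper_denom z (rep C)" for C
  have cmod_n: "cmod (n C) \<le> sqrt X" if "C \<in> count_set G z t" for C
    using cmod_mob_denom_le_if_in_count_set[OF SL[OF that] z] rep[OF that] that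
    by (simp add: n_def X_def)
  have "C\<^sub>1 = C\<^sub>2"
    if C\<^sub>1: "C\<^sub>1 \<in> count_set G z t" and C\<^sub>2: "C\<^sub>2 \<in> count_set G z t"
      and close: "\<bar>Arg (n C\<^sub>2) - Arg (n C\<^sub>1)\<bar> < exp (- t)" for C\<^sub>1 C\<^sub>2
  proof -
    have "\<bar>lower_left (mmult (rep C\<^sub>2) (minv (rep C\<^sub>1)))\<bar> < 1"
    proof (rule ccontr)
      assume "\<not> ?thesis"
      then have "Im z * 1 \<le> Im z * \<bar>lower_left (mmult (rep C\<^sub>2) (minv (rep C\<^sub>1)))\<bar>"
        using z by (intro mult_left_mono) auto
      then have "Im z \<le> \<bar>Im (cnj (n C\<^sub>1) * n C\<^sub>2)\<bar>"
        unfolding n_def abs_Im_cnj_upper_denom abs_of_pos[OF z] by simp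
      also have "\<dots> \<le> cmod (n C\<^sub>1) * cmod (n C\<^sub>2) * \<bar>Arg (n C\<^sub>2) - Arg (n C\<^sub>1)\<bar>"
        by (rule abs_Im_cnj_mult_le)
      also have "\<dots> \<le> X * \<bar>Arg (n C\<^sub>2) - Arg (n C\<^sub>1)\<bar>"
        using mult_mono[OF cmod_n[OF C\<^sub>1] cmod_n[OF C\<^sub>2]] z
        by (intro mult_right_mono) (simp_all add: X_def)
      also have "\<dots> < X * exp (- t)"
        using close z by (simp add: X_def)
      also have "\<dots> = Im z"
        by (simp add: X_def exp_minus)
      finally show False
        by simp
    qed
    then have "coset_of (rep C\<^sub>1) = coset_of (rep C\<^sub>2)"
      using coset_of_eq_if_abs_lower_left_less_1[OF F T stab] rep C\<^sub>1 C\<^sub>2 by blast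
    then show ?thesis
      using rep C\<^sub>1 C\<^sub>2 by metis
  qed
  then have "finite (count_set G z t) \<and> real (card (count_set G z t)) \<le> pi / exp (- t) + 1"
    using Arg_upper_denom_bounds
    by (intro card_le_if_separated[where \<phi> = "\<lambda>C. Arg (n C)"]) (auto simp: n_def abs_minus_commute)
  then show ?thesis
    by (simp add: exp_minus divide_inverse)
qed

theorem proposition2p1:
  shows "\<exists>U>0. \<forall>(g::nat) (G::mat2 set) (z::complex) (t::real).
           normalized_once_punctured g G \<and> 0 < Im z \<and> Im z < 1 \<and> 0 \<le> t \<longrightarrow>
           finite (count_set G z t) \<and> real (Pi_count G z t) \<le> U * exp t"
proof (intro exI[of _ "pi + 1"] conjI allI impI)
  show "0 < pi + 1"
    using pi_gt_zero by linarith
  fix g G z and t :: real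
  assume H: "normalized_once_punctured g G \<and> 0 < Im z \<and> Im z < 1 \<and> 0 \<le> t"
  then have "finite (count_set G z t) \<and> real (card (count_set G z t)) \<le> pi * exp t + 1"
    by (intro count_set_finite_card_le) (auto simp: normalized_once_punctured_def)
  moreover have "pi * exp t + 1 \<le> (pi + 1) * exp t"
    using H by (simp add: algebra_simps)
  ultimately show "finite (count_set G z t)" "real (Pi_count G z t) \<le> (pi + 1) * exp t"
    by (auto simp: Pi_count_def)
qed
end
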